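(* Let $K\ge 2$, $k\ge 2$ and $n\ge1$ be integers, let $\gamma>0$, and let $C_1\subseteq[K]^n$ be a code (with at least two codewords) with $\mathrm{LCS}(C_1)=\gamma n$. Then there exist an integer $T=T(K,\gamma,k)$ satisfying $T\le 32\cdot(2k/\gamma)^K$ and an injective map $\tau\colon[K]\to[k]^T$ such that the code $C_2\subseteq[k]^N$, $N=nT$, obtained by replacing each symbol of each codeword of $C_1$ by its image under $\tau$, has the following property: if $s$ is a common subsequence between two distinct codewords $c,\tilde c\in C_2$, then \[\operatorname{span} s\ \ge\ (k+1)\operatorname{len} s-4\gamma kN.\] In particular, $\mathrm{LCS}(C_2)\le\frac{2+4\gamma k}{k+1}N<\left(\frac{2}{k+1}+4\gamma\right)N$.
   Context: $[k]=\{1,\dots,k\}$. Symbols in words are treated as distinguishable positions. A subsequence of a word $w$ is obtained by deleting symbols; a subword is a subsequence of consecutive symbols. The span $\operatorname{span}_w w'$ of a subsequence $w'$ of $w$ is the length of the shortest subword of $w$ containing $w'$. A common subsequence of words $w_1,w_2$ is a pair $s=(w_1',w_2')$ of subsequences of $w_1$ and $w_2$ respectively that are equal as words; $\operatorname{len} s$ is their common length and $\operatorname{span} s=\operatorname{span}_{w_1}w_1'+\operatorname{span}_{w_2}w_2'$. $\mathrm{LCS}(w_1,w_2)$ is the maximum length of a common subsequence, and $\mathrm{LCS}(C)=\max_{c_1\ne c_2\in C}\mathrm{LCS}(c_1,c_2)$ for a code $C$. *)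

theory Defs
  imports Complex_Main
begin

text \<open>Words are lists; a subsequence of a word w is given by the set of its
  positions I \<subseteq> {..<length w} (positions are distinguishable), the subsequence
  itself being nths w I.\<close>

definition span_pos :: "nat set \<Rightarrow> nat" where
  "span_pos I = (if I = {} then 0 else Max I - Min I + 1)"

definition common_subseq :: "'a list \<Rightarrow> 'a list \<Rightarrow> nat set \<Rightarrow> nat set \<Rightarrow> bool" where
  "common_subseq w1 w2 I J \<longleftrightarrow>
     I \<subseteq> {..<length w1} \<and> J \<subseteq> {..<length w2} \<and> nths w1 I = nths w2 J"

definition cs_len :: "nat set \<Rightarrow> nat set \<Rightarrow> nat" where
  "cs_len I J = card I"

definition cs_span :: "nat set \<Rightarrow> nat set \<Rightarrow> nat" where
  "cs_span I J = span_pos I + span_pos J"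

definition LCS :: "'a list \<Rightarrow> 'a list \<Rightarrow> nat" where
  "LCS w1 w2 = Max {cs_len I J | I J. common_subseq w1 w2 I J}"

definition LCS_code :: "'a list set \<Rightarrow> nat" where
  "LCS_code C = Max {LCS c1 c2 | c1 c2. c1 \<in> C \<and> c2 \<in> C \<and> c1 \<noteq> c2}"

definition concat_code :: "('a \<Rightarrow> 'b list) \<Rightarrow> 'a list set \<Rightarrow> 'b list set" where
  "concat_code \<tau> C = (\<lambda>c. concat (map \<tau> c)) ` C"

end

theory Submission
  imports Defs
begin

text \<open>Symbol a is encoded by the word of length T = k D^K that runs cyclically through the
  letters 1, ..., k, repeating each letter D^(a-1) times. Follow the matched pairs of a common
  subsequence of two encoded codewords. While both positions stay inside a pair of blocks carrying
  different symbols, the two run lengths r < R differ by a factor of at least D, and with the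
  potential (k-1)(u mod r) + (k-1) r (v div R) of the offsets every step advances the two
  positions by k + 1 on average: inside one run of the slow word, the fast word either moves
  within its run, paying k - 1 per position into the potential, or skips at least k - 1 runs to
  reach the same letter again; entering a new run of the slow word raises the potential by
  (k-1) r. The potential is at most about k^2 D^(K-1); this, plus a deficit k - 1, is charged to
  each of the fewer than 2n block changes. Steps inside blocks carrying equal symbols lose k - 1
  each, and as a block holds only T positions, a greedy choice among them yields a common
  subsequence of the outer codewords of length at least their number divided by 2T. For
  D \<approx> 1/\<gamma> both losses together are at most 4 \<gamma> k N.\<close>

section \<open>Common subsequences\<close>

lemma nths_eq_map_nth_sorted_list_of_set:
  assumes "I \<subseteq> {..<length w}"
  shows "nths w I = map ((!) w) (sorted_list_of_set I)"
proof -
  have "zip w [0..<length w] = map (\<lambda>i. (w ! i, i)) [0..<length w]"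
    by (rule nth_equalityI) auto
  then have "nths w I = map ((!) w) (filter (\<lambda>i. i \<in> I) [0..<length w])"
    by (simp add: nths_def filter_map comp_def)
  also have "filter (\<lambda>i. i \<in> I) [0..<length w] = sorted_list_of_set I"
    using assms finite_subset[OF assms]
    by (intro sorted_distinct_set_unique) (auto intro: sorted_wrt_filter)
  finally show ?thesis .
qed

lemma common_subseq_of_increasing_pairs:
  assumes sorted: "sorted_wrt (\<lambda>p q. fst p < fst q \<and> snd p < snd q) ps"
    and match: "\<forall>(x, y)\<in>set ps. x < length w1 \<and> y < length w2 \<and> w1 ! x = w2 ! y"
  shows "common_subseq w1 w2 (fst ` set ps) (snd ` set ps) \<and> cs_len (fst ` set ps) (snd ` set ps) = length ps"
proof -
  have fst_sorted: "sorted_wrt (<) (map fst ps)" and snd_sorted: "sorted_wrt (<) (map snd ps)"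
    using sorted by (auto simp: sorted_wrt_map elim: sorted_wrt_mono_rel[rotated])
  have "sorted_list_of_set (set xs) = xs" if "sorted_wrt (<) xs" for xs :: "nat list"
    using that by (simp add: strict_sorted_iff sorted_list_of_set_sort_remdups distinct_remdups_id sorted_sort_id)
  then have "sorted_list_of_set (fst ` set ps) = map fst ps" "sorted_list_of_set (snd ` set ps) = map snd ps"
    using fst_sorted snd_sorted by (metis set_map)+
  moreover have "fst ` set ps \<subseteq> {..<length w1}" "snd ` set ps \<subseteq> {..<length w2}"
    using match by auto
  moreover have "map ((!) w1) (map fst ps) = map ((!) w2) (map snd ps)"
    using match by (auto simp: list_eq_iff_nth_eq)
  moreover have "card (fst ` set ps) = length ps"
    using fst_sorted strict_sorted_iff distinct_card by (metis set_map length_map)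
  ultimately show ?thesis
    unfolding common_subseq_def cs_len_def by (simp add: nths_eq_map_nth_sorted_list_of_set)
qed

lemma finite_cs_lens: "finite {cs_len I J | I J. common_subseq w1 w2 I J}"
proof (rule finite_subset)
  show "{cs_len I J | I J. common_subseq w1 w2 I J} \<subseteq> {..length w1}"
    unfolding common_subseq_def cs_len_def by (auto intro: card_mono[where B = "{..<length w1}", simplified])
qed simp

lemma LCS_attained: "\<exists>I J. common_subseq w1 w2 I J \<and> LCS w1 w2 = cs_len I J"
proof -
  have "common_subseq w1 w2 {} {}"
    by (simp add: common_subseq_def)
  then have "LCS w1 w2 \<in> {cs_len I J | I J. common_subseq w1 w2 I J}"
    unfolding LCS_def using finite_cs_lens by (intro Max_in) auto
  then show ?thesis by blast
qed

lemma LCS_ge: "common_subseq w1 w2 I J \<Longrightarrow> cs_len I J \<le> LCS w1 w2"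
  unfolding LCS_def using finite_cs_lens by (intro Max_ge) auto

lemma LCS_le_length: "LCS w1 w2 \<le> length w1"
  using LCS_attained[of w1 w2] card_mono[of "{..<length w1}"]
  by (auto simp: common_subseq_def cs_len_def)

lemma length_le_LCS_of_increasing_pairs:
  assumes "sorted_wrt (\<lambda>p q. fst p < fst q \<and> snd p < snd q) ps"
    and "\<forall>(x, y)\<in>set ps. x < length w1 \<and> y < length w2 \<and> w1 ! x = w2 ! y"
  shows "length ps \<le> LCS w1 w2"
  using common_subseq_of_increasing_pairs[OF assms] LCS_ge by metis

lemma finite_LCS_values:
  assumes "finite C"
  shows "finite {LCS d1 d2 | d1 d2. d1 \<in> C \<and> d2 \<in> C \<and> d1 \<noteq> d2}"
proof (rule finite_subset)
  show "{LCS d1 d2 | d1 d2. d1 \<in> C \<and> d2 \<in> C \<and> d1 \<noteq> d2} \<subseteq> case_prod LCS ` (C \<times> C)"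
    by auto
qed (use assms in simp)

lemma LCS_code_attained:
  assumes "finite C" "c1 \<in> C" "c2 \<in> C" "c1 \<noteq> c2"
  shows "\<exists>d1\<in>C. \<exists>d2\<in>C. d1 \<noteq> d2 \<and> LCS_code C = LCS d1 d2"
proof -
  have "LCS_code C \<in> {LCS d1 d2 | d1 d2. d1 \<in> C \<and> d2 \<in> C \<and> d1 \<noteq> d2}"
    unfolding LCS_code_def using assms finite_LCS_values by (intro Max_in) auto
  then show ?thesis by blast
qed

lemma LCS_code_ge:
  assumes "finite C" "c1 \<in> C" "c2 \<in> C" "c1 \<noteq> c2"
  shows "LCS c1 c2 \<le> LCS_code C"
  unfolding LCS_code_def using assms finite_LCS_values by (intro Max_ge) auto

lemma span_pos_le: "I \<subseteq> {..<m} \<Longrightarrow> span_pos I \<le> m"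
  using Max_in[of I] finite_subset[of I "{..<m}"] by (fastforce simp: span_pos_def)

lemma span_pos_image_strict_mono:
  fixes g :: "nat \<Rightarrow> nat"
  assumes "strict_mono_on {..m} g"
  shows "span_pos (g ` {..m}) = g m - g 0 + 1"
proof -
  have "Max (g ` {..m}) = g m" "Min (g ` {..m}) = g 0"
    using strict_mono_on_leD[OF assms] by (auto intro!: Max_eqI Min_eqI)
  then show ?thesis
    by (simp add: span_pos_def)
qed

lemma common_subseq_matching:
  assumes cs: "common_subseq w1 w2 I J" and "I \<noteq> {}"
  obtains g h :: "nat \<Rightarrow> nat" and m where
    "strict_mono_on {..m} g" "strict_mono_on {..m} h"
    "\<And>t. t \<le> m \<Longrightarrow> g t < length w1 \<and> h t < length w2 \<and> w1 ! g t = w2 ! h t"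
    "cs_len I J = Suc m" "cs_span I J = (g m - g 0) + (h m - h 0) + 2"
proof -
  define xs where "xs = sorted_list_of_set I"
  define ys where "ys = sorted_list_of_set J"
  have I: "I \<subseteq> {..<length w1}" and J: "J \<subseteq> {..<length w2}"
    using cs by (auto simp: common_subseq_def)
  then have "finite I" "finite J"
    by (auto intro: finite_subset)
  have eq: "map ((!) w1) xs = map ((!) w2) ys"
    using cs I J by (simp add: common_subseq_def xs_def ys_def nths_eq_map_nth_sorted_list_of_set)
  then have "length ys = length xs"
    by (metis length_map)
  moreover have "length xs = card I"
    by (simp add: xs_def)
  ultimately obtain m where m: "length xs = Suc m" "length ys = Suc m"
    using \<open>I \<noteq> {}\<close> \<open>finite I\<close> by (metis card_gt_0_iff gr0_implies_Suc)
  have "strict_mono_on {..m} ((!) xs)" "strict_mono_on {..m} ((!) ys)"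
    using m sorted_wrt_nth_less[of "(<)" xs] sorted_wrt_nth_less[of "(<)" ys]
    by (auto intro!: strict_mono_onI simp: xs_def ys_def)
  moreover have "set xs = I" "set ys = J"
    using \<open>finite I\<close> \<open>finite J\<close> by (simp_all add: xs_def ys_def)
  then have "I = (!) xs ` {..m}" "J = (!) ys ` {..m}"
    using m by (auto simp: set_conv_nth less_Suc_eq_le)
  moreover have "t \<le> m \<Longrightarrow> xs ! t < length w1 \<and> ys ! t < length w2 \<and> w1 ! (xs ! t) = w2 ! (ys ! t)" for t
    using m I J eq \<open>set xs = I\<close> \<open>set ys = J\<close> nth_mem[of t xs] nth_mem[of t ys]
    by (auto simp: list_eq_iff_nth_eq)
  ultimately show ?thesis
    using m by (intro that)
      (simp_all add: cs_len_def cs_span_def span_pos_image_strict_mono card_image strict_mono_on_imp_inj_on)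
qed

lemma LCS_code_le_of_span_bound:
  fixes \<alpha> E :: real
  assumes "finite C" "c1 \<in> C" "c2 \<in> C" "c1 \<noteq> c2" and len: "\<forall>c\<in>C. length c = N" and "\<alpha> > 0"
    and span: "\<And>c c' I J. c \<in> C \<Longrightarrow> c' \<in> C \<Longrightarrow> c \<noteq> c' \<Longrightarrow> common_subseq c c' I J \<Longrightarrow>
      \<alpha> * cs_len I J - E \<le> cs_span I J"
  shows "real (LCS_code C) \<le> (2 * real N + E) / \<alpha>"
proof -
  obtain c c' I J where cc: "c \<in> C" "c' \<in> C" "c \<noteq> c'" and cs: "common_subseq c c' I J"
    and lcs: "LCS_code C = cs_len I J"
    using LCS_code_attained[OF assms(1-4)] LCS_attained by metis
  have "span_pos I \<le> N" "span_pos J \<le> N"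
    using cs cc len by (auto simp: common_subseq_def intro: span_pos_le)
  then have "real (cs_span I J) \<le> 2 * real N"
    by (simp add: cs_span_def)
  then have "\<alpha> * LCS_code C \<le> 2 * real N + E"
    using span[OF cc cs] lcs by simp
  then show ?thesis
    using \<open>\<alpha> > 0\<close> by (simp add: field_simps)
qed

section \<open>Greedy chains\<close>

lemma card_div_fibre_le:
  fixes g :: "'a \<Rightarrow> nat"
  assumes "inj_on g S" "T > 0"
  shows "card {t\<in>S. g t div T = x} \<le> T"
proof -
  have "g t \<in> {x * T..<x * T + T}" if "g t div T = x" for t
  proof -
    have "x * T + g t mod T = g t" "g t mod T < T"
      using that assms(2) div_mult_mod_eq[of "g t" T] by auto
    then show ?thesis by simp
  qed
  then have "card {t\<in>S. g t div T = x} \<le> card {x * T..<x * T + T}"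
    using assms(1) by (intro card_inj_on_le[where f = g]) (auto intro: inj_on_subset)
  then show ?thesis by simp
qed

lemma card_le_card_off_cross:
  assumes "finite S" "card {t\<in>S. f t = x} \<le> T" "card {t\<in>S. g t = y} \<le> T"
  shows "card S \<le> card {t\<in>S. f t \<noteq> x \<and> g t \<noteq> y} + 2 * T"
proof -
  have "S = {t\<in>S. f t \<noteq> x \<and> g t \<noteq> y} \<union> ({t\<in>S. f t = x} \<union> {t\<in>S. g t = y})"
    by auto
  then have "card S \<le> card {t\<in>S. f t \<noteq> x \<and> g t \<noteq> y} + (card {t\<in>S. f t = x} + card {t\<in>S. g t = y})"
    by (metis (no_types, lifting) card_Un_le add_left_mono le_trans)
  then show ?thesis
    using assms(2,3) by linarith
qed

lemma exists_increasing_pairs_of_bounded_fibres: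
  fixes S :: "'a::linorder set" and f g :: "'a \<Rightarrow> 'b::linorder"
  assumes "finite S" "mono_on S f" "mono_on S g"
    and "\<And>x. card {t\<in>S. f t = x} \<le> T" "\<And>y. card {t\<in>S. g t = y} \<le> T"
  shows "\<exists>ps. sorted_wrt (\<lambda>p q. fst p < fst q \<and> snd p < snd q) ps
    \<and> set ps \<subseteq> (\<lambda>t. (f t, g t)) ` S \<and> card S \<le> 2 * T * length ps"
  using assms
proof (induction S rule: finite_psubset_induct)
  case (psubset S)
  show ?case
  proof (cases "S = {}")
    case True
    then show ?thesis by (intro exI[of _ "[]"]) auto
  next
    case False
    \<comment> \<open>Greedy step: keep the first element and drop all elements sharing a coordinate with it.\<close>
    define t0 where "t0 = Min S"
    define S' where "S' = {t\<in>S. f t \<noteq> f t0 \<and> g t \<noteq> g t0}"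
    have t0: "t0 \<in> S" "\<And>t. t \<in> S \<Longrightarrow> t0 \<le> t"
      using psubset.hyps False by (simp_all add: t0_def)
    have "S' \<subset> S"
      using t0 by (auto simp: S'_def)
    moreover have "card {t\<in>S'. f t = x} \<le> T" "card {t\<in>S'. g t = x} \<le> T" for x
    proof -
      have "card {t\<in>S'. f t = x} \<le> card {t\<in>S. f t = x}" "card {t\<in>S'. g t = x} \<le> card {t\<in>S. g t = x}"
        using psubset.hyps by (auto simp: S'_def intro!: card_mono)
      then show "card {t\<in>S'. f t = x} \<le> T" "card {t\<in>S'. g t = x} \<le> T"
        using psubset.prems(3,4)[of x] by simp_all
    qed
    ultimately obtain ps where ps: "sorted_wrt (\<lambda>p q. fst p < fst q \<and> snd p < snd q) ps"
      "set ps \<subseteq> (\<lambda>t. (f t, g t)) ` S'" "card S' \<le> 2 * T * length ps"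
      using psubset.IH[of S'] psubset.prems(1,2) mono_on_subset[of S _ S'] by blast
    have "f t0 < fst p \<and> g t0 < snd p" if "p \<in> set ps" for p
    proof -
      obtain t where "t \<in> S" "f t \<noteq> f t0" "g t \<noteq> g t0" "p = (f t, g t)"
        using ps(2) \<open>p \<in> set ps\<close> by (auto simp: S'_def)
      then show ?thesis
        using t0 mono_onD[OF psubset.prems(1), of t0 t] mono_onD[OF psubset.prems(2), of t0 t]
        by (auto simp: order_less_le)
    qed
    then have "sorted_wrt (\<lambda>p q. fst p < fst q \<and> snd p < snd q) ((f t0, g t0) # ps)"
      using ps(1) by simp
    moreover have "set ((f t0, g t0) # ps) \<subseteq> (\<lambda>t. (f t, g t)) ` S"
      using ps(2) t0 by (auto simp: S'_def)
    moreover have "card S \<le> 2 * T * length ((f t0, g t0) # ps)"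
      using card_le_card_off_cross[OF psubset.hyps psubset.prems(3,4), of "f t0" "g t0"] ps(3)
      by (simp add: S'_def)
    ultimately show ?thesis by blast
  qed
qed

section \<open>Matching two run-periodic words\<close>

lemma sum_le_telescope:
  fixes f a b :: "nat \<Rightarrow> 'a::ordered_comm_monoid_add"
  assumes "\<And>t. t < m \<Longrightarrow> f t + a t \<le> f (Suc t) + b t"
  shows "f 0 + (\<Sum>t<m. a t) \<le> f m + (\<Sum>t<m. b t)"
  using assms
proof (induction m)
  case (Suc m)
  have "f 0 + (\<Sum>t<Suc m. a t) = (f 0 + (\<Sum>t<m. a t)) + a m"
    by (simp add: add_ac)
  also have "\<dots> \<le> (f m + (\<Sum>t<m. b t)) + a m"
    using Suc by (intro add_right_mono) simp
  also have "\<dots> = (f m + a m) + (\<Sum>t<m. b t)"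
    by (simp add: add_ac)
  also have "\<dots> \<le> (f (Suc m) + b m) + (\<Sum>t<m. b t)"
    using Suc.prems by (intro add_right_mono) simp
  also have "\<dots> = f (Suc m) + (\<Sum>t<Suc m. b t)"
    by (simp add: add_ac)
  finally show ?case .
qed simp

text \<open>Potential of offsets u, v matched in the words x \<mapsto> (x div r) mod k and
  x \<mapsto> (x div R) mod k.\<close>
definition run_potential :: "nat \<Rightarrow> nat \<Rightarrow> nat \<Rightarrow> nat \<Rightarrow> nat \<Rightarrow> nat" where
  "run_potential k r R u v =
     (if r < R then (k - 1) * (u mod r) + (k - 1) * r * (v div R)
      else if R < r then (k - 1) * (v mod R) + (k - 1) * R * (u div r)
      else 0)"

lemma run_potential_swap: "run_potential k r R u v = run_potential k R r v u"
  by (simp add: run_potential_def)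

lemma same_letter_step:
  fixes u u' r k :: nat
  assumes "u < u'" "r > 0" and letter: "(u div r) mod k = (u' div r) mod k"
  shows "k + (k - 1) * (u mod r) \<le> (u' - u) + (k - 1) * (u' mod r)"
proof (cases "u div r = u' div r")
  case True
  have "u = u div r * r + u mod r" "u' = u div r * r + u' mod r"
    using True div_mult_mod_eq[of u r] div_mult_mod_eq[of u' r] by simp_all
  then have "u' mod r = u mod r + (u' - u)"
    using assms(1) by linarith
  moreover have "(k - 1) * 1 \<le> (k - 1) * (u' - u)"
    using assms(1) by (intro mult_le_mono2) simp
  then have "k \<le> (u' - u) + (k - 1) * (u' - u)"
    using assms(1) by linarith
  ultimately show ?thesis
    by (simp add: algebra_simps)
next
  case False
  then have "u div r < u' div r"
    using assms(1) div_le_mono[of u u' r] by simp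
  moreover have "k dvd u' div r - u div r"
    using letter mod_eq_dvd_iff_nat[of "u div r" "u' div r" k] \<open>u div r < u' div r\<close> by simp
  ultimately have "0 < k" "u div r + k \<le> u' div r"
    by (auto dest: dvd_imp_le intro: Nat.gr0I)
  then have "(u div r + k) * r \<le> u' div r * r"
    by (intro mult_le_mono1)
  then have "u div r * r + k * r \<le> u' div r * r"
    by (simp add: distrib_right)
  then have "u div r * r + k * r \<le> u'"
    using div_times_less_eq_dividend[of u' r] by linarith
  moreover have "k * (u mod r) + k \<le> k * r"
    using mult_le_mono2[of "u mod r + 1" r k] \<open>r > 0\<close> by (simp add: Suc_le_eq)
  moreover have "(k - 1) * (u mod r) + u mod r = k * (u mod r)"
    using \<open>0 < k\<close> by (cases k) simp_all
  ultimately show ?thesis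
    using div_mult_mod_eq[of u r] by linarith
qed

lemma run_potential_step_less:
  fixes u u' v v' r R k :: nat
  assumes "u < u'" "v < v'" "0 < r" "r < R"
    and match: "(u div r) mod k = (v div R) mod k" "(u' div r) mod k = (v' div R) mod k"
  shows "k + 1 + run_potential k r R u v \<le> (u' - u) + (v' - v) + run_potential k r R u' v'"
proof (cases "v div R = v' div R")
  case True
  then have "(u div r) mod k = (u' div r) mod k"
    using match by simp
  then have "k + (k - 1) * (u mod r) \<le> (u' - u) + (k - 1) * (u' mod r)"
    by (rule same_letter_step[OF assms(1,3)])
  then show ?thesis
    using assms(2,4) True by (simp add: run_potential_def)
next
  case False
  then have "(k - 1) * r * (v div R + 1) \<le> (k - 1) * r * (v' div R)"
    using assms(2) div_le_mono[of v v' R] by (intro mult_le_mono2) simp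
  then have "(k - 1) * r * (v div R) + (k - 1) * r \<le> (k - 1) * r * (v' div R)"
    by (simp add: distrib_left)
  moreover have "(k - 1) * (u mod r + 1) \<le> (k - 1) * r"
    using \<open>r > 0\<close> by (intro mult_le_mono2) (simp add: Suc_le_eq)
  then have "(k - 1) * (u mod r) + (k - 1) \<le> (k - 1) * r"
    by (simp add: distrib_left)
  moreover have "run_potential k r R u v = (k - 1) * (u mod r) + (k - 1) * r * (v div R)"
    "run_potential k r R u' v' = (k - 1) * (u' mod r) + (k - 1) * r * (v' div R)"
    using \<open>r < R\<close> by (simp_all add: run_potential_def)
  ultimately show ?thesis
    using assms(1,2) by linarith
qed

lemma run_potential_step:
  fixes u u' v v' r R k :: nat
  assumes "u < u'" "v < v'" "0 < r" "0 < R" "r \<noteq> R"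
    and "(u div r) mod k = (v div R) mod k" "(u' div r) mod k = (v' div R) mod k"
  shows "k + 1 + run_potential k r R u v \<le> (u' - u) + (v' - v) + run_potential k r R u' v'"
proof (cases "r < R")
  case True
  then show ?thesis
    using run_potential_step_less assms by blast
next
  case False
  then have "R < r"
    using \<open>r \<noteq> R\<close> by simp
  then show ?thesis
    using run_potential_step_less[of v v' u u' R r k] assms by (simp add: run_potential_swap add.commute)
qed

section \<open>The inner code\<close>

lemma nth_concat_equal_length:
  assumes "\<forall>xs\<in>set xss. length xs = T" "p < length xss * T"
  shows "concat xss ! p = xss ! (p div T) ! (p mod T)"
  using assms
proof (induction xss arbitrary: p)
  case (Cons xs xss)
  show ?case
  proof (cases "p < T")
    case True
    then show ?thesis
      using Cons.prems by (simp add: nth_append)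
  next
    case False
    then have "concat xss ! (p - T) = xss ! ((p - T) div T) ! ((p - T) mod T)"
      using Cons by simp
    moreover have "T > 0"
      using False Cons.prems(2) by (cases T) simp_all
    then have "p div T = Suc ((p - T) div T)" "p mod T = (p - T) mod T"
      using False by (simp_all add: le_div_geq le_mod_geq)
    ultimately show ?thesis
      using False Cons.prems by (simp add: nth_append)
  qed
qed simp

locale periodic_inner_code =
  fixes k D K :: nat
  assumes k_ge_2: "k \<ge> 2" and D_ge_2: "D \<ge> 2" and K_pos: "K \<ge> 1"
begin

definition T :: nat where
  "T = k * D ^ K"

definition run :: "nat \<Rightarrow> nat" where
  "run a = D ^ (a - 1)"

definition tau :: "nat \<Rightarrow> nat list" where
  "tau a = map (\<lambda>x. Suc ((x div run a) mod k)) [0..<T]"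

definition encode :: "nat list \<Rightarrow> nat list" where
  "encode c = concat (map tau c)"

definition pot :: "nat list \<Rightarrow> nat list \<Rightarrow> nat \<Rightarrow> nat \<Rightarrow> nat" where
  "pot c c' i j = run_potential k (run (c ! (i div T))) (run (c' ! (j div T))) (i mod T) (j mod T)"

definition pot_max :: nat where
  "pot_max = (k - 1) * (k + 1) * D ^ (K - 1)"

lemma T_eq: "T = k * D ^ (K - 1) * D"
  using K_pos by (simp add: T_def mult.assoc flip: power_Suc2)

lemma T_pos: "T > 0"
  using k_ge_2 D_ge_2 by (simp add: T_def)

lemma run_pos: "run a > 0"
  using D_ge_2 by (simp add: run_def)

lemma run_le: "a \<in> {1..K} \<Longrightarrow> run a \<le> D ^ (K - 1)"
  using D_ge_2 by (auto simp: run_def intro: power_increasing)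

lemma run_mult_D_le: "run a < run b \<Longrightarrow> run a * D \<le> run b"
  using D_ge_2 by (auto simp: run_def power_strict_increasing_iff mult.commute simp flip: power_Suc
    intro: power_increasing)

lemma run_dvd_T: "a \<in> {1..K} \<Longrightarrow> run a dvd T"
  using le_imp_power_dvd[of "a - 1" K D] by (auto simp: run_def T_def intro: dvd_mult)

lemma inj_on_run: "inj_on run {1..K}"
  using D_ge_2 by (auto simp: inj_on_def run_def power_inject_exp)

lemma run_less_T:
  assumes "a \<in> {1..K}"
  shows "run a < T"
proof -
  have "run a < 2 * D ^ (K - 1)"
    using run_le[OF assms] D_ge_2 zero_less_power[of D "K - 1"] by linarith
  also have "\<dots> \<le> k * D ^ (K - 1) * D"
    using k_ge_2 D_ge_2 mult_le_mono[of 2 k 1 D] by (simp add: mult.commute mult.left_commute)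
  finally show ?thesis
    by (simp add: T_eq)
qed

lemma length_tau [simp]: "length (tau a) = T"
  by (simp add: tau_def)

lemma nth_tau: "x < T \<Longrightarrow> tau a ! x = Suc ((x div run a) mod k)"
  by (simp add: tau_def)

lemma set_tau: "set (tau a) \<subseteq> {1..k}"
  using k_ge_2 by (auto simp: tau_def Suc_le_eq)

lemma tau_neq_of_run_less:
  assumes "a \<in> {1..K}" "run a < run b"
  shows "tau a \<noteq> tau b"
proof -
  have "tau a ! run a = Suc (Suc 0)" "tau b ! run a = Suc 0"
    using nth_tau[OF run_less_T[OF assms(1)]] run_pos[of a] assms(2) k_ge_2 by simp_all
  then show ?thesis by auto
qed

lemma inj_on_tau: "inj_on tau {1..K}"
proof (rule inj_onI)
  fix a b assume "a \<in> {1..K}" "b \<in> {1..K}" "tau a = tau b"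
  then show "a = b"
    using tau_neq_of_run_less inj_onD[OF inj_on_run] by (metis linorder_neqE_nat)
qed

lemma length_encode: "length (encode c) = length c * T"
  by (induction c) (simp_all add: encode_def)

lemma nth_encode:
  "p < length c * T \<Longrightarrow> encode c ! p = Suc ((p mod T div run (c ! (p div T))) mod k)"
  using nth_concat_equal_length[of "map tau c" T p] T_pos
  by (simp add: encode_def nth_tau less_mult_imp_div_less)

lemma encode_injective:
  assumes "length c = length c'" "set c \<subseteq> {1..K}" "set c' \<subseteq> {1..K}" "encode c = encode c'"
  shows "c = c'"
proof -
  have "\<forall>(x, y)\<in>set (zip (map tau c) (map tau c')). length x = length y"
    by (auto simp: set_zip)
  then have "map tau c = map tau c'"
    using assms(1,4) by (simp add: encode_def concat_eq_concat_iff)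
  then show ?thesis
    using inj_on_map_eq_map[OF inj_on_subset[OF inj_on_tau]] assms(2,3) by blast
qed

lemma run_mult_div_le:
  assumes "a \<in> {1..K}" "b \<in> {1..K}" "run a < run b" "v < T"
  shows "run a * (v div run b) \<le> k * D ^ (K - 1)"
proof -
  have "run a * (v div run b) * D \<le> run a * D * (T div run b)"
    using assms(4) by (simp add: div_le_mono)
  also have "\<dots> \<le> run b * (T div run b)"
    using run_mult_D_le[OF assms(3)] by (rule mult_le_mono1)
  also have "\<dots> = k * D ^ (K - 1) * D"
    using run_dvd_T[OF assms(2)] by (simp add: T_eq)
  finally show ?thesis
    using D_ge_2 by simp
qed

lemma run_potential_le_pot_max:
  assumes "a \<in> {1..K}" "b \<in> {1..K}" "u < T" "v < T"
  shows "run_potential k (run a) (run b) u v \<le> pot_max"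
proof -
  have bound: "(k - 1) * (u mod run a) + (k - 1) * run a * (v div run b) \<le> pot_max"
    if "a \<in> {1..K}" "b \<in> {1..K}" "run a < run b" "v < T" for a b u v
  proof -
    have "u mod run a \<le> D ^ (K - 1)"
      using run_le[OF that(1)] mod_less_divisor[OF run_pos, of u a] by linarith
    then have "(k - 1) * (u mod run a) + (k - 1) * (run a * (v div run b))
        \<le> (k - 1) * D ^ (K - 1) + (k - 1) * (k * D ^ (K - 1))"
      using run_mult_div_le[OF that] by (intro add_mono mult_le_mono2)
    also have "\<dots> = pot_max"
      by (simp add: pot_max_def mult.assoc distrib_left distrib_right add_ac)
    finally show ?thesis
      by (simp add: mult.assoc)
  qed
  show ?thesis
    using bound[OF assms(1,2) _ assms(4)] bound[OF assms(2,1) _ assms(3)]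
    by (auto simp: run_potential_def)
qed

lemma pot_le_pot_max:
  assumes "set c \<subseteq> {1..K}" "set c' \<subseteq> {1..K}" "i < length c * T" "j < length c' * T"
  shows "pot c c' i j \<le> pot_max"
proof -
  have "c ! (i div T) \<in> {1..K}" "c' ! (j div T) \<in> {1..K}"
    using assms less_mult_imp_div_less nth_mem by blast+
  then show ?thesis
    unfolding pot_def using T_pos by (intro run_potential_le_pot_max) auto
qed

lemma pot_same_symbol: "c ! (i div T) = c' ! (j div T) \<Longrightarrow> pot c c' i j = 0"
  by (simp add: pot_def run_potential_def)

lemma pot_step_within_blocks:
  assumes words: "set c \<subseteq> {1..K}" "set c' \<subseteq> {1..K}"
    and "i < i'" "j < j'" "i' < length c * T" "j' < length c' * T"
    and blocks: "i' div T = i div T" "j' div T = j div T"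
    and match: "encode c ! i = encode c' ! j" "encode c ! i' = encode c' ! j'"
    and symbols: "c ! (i div T) \<noteq> c' ! (j div T)"
  shows "k + 1 + pot c c' i j \<le> (i' - i) + (j' - j) + pot c c' i' j'"
proof -
  define a b where "a = c ! (i div T)" and "b = c' ! (j div T)"
  have "i = i div T * T + i mod T" "i' = i div T * T + i' mod T"
    "j = j div T * T + j mod T" "j' = j div T * T + j' mod T"
    using div_mult_mod_eq[of i T] div_mult_mod_eq[of j T] div_mult_mod_eq[of i' T] div_mult_mod_eq[of j' T]
    by (simp_all add: blocks)
  then have offsets: "i' - i = i' mod T - i mod T" "j' - j = j' mod T - j mod T"
    "i mod T < i' mod T" "j mod T < j' mod T"
    using \<open>i < i'\<close> \<open>j < j'\<close> by linarith+
  have "i div T < length c" "j div T < length c'"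
    using assms(3-6) by (simp_all add: less_mult_imp_div_less)
  then have "a \<in> {1..K}" "b \<in> {1..K}"
    using words nth_mem unfolding a_def b_def by blast+
  then have "run a \<noteq> run b"
    using symbols inj_onD[OF inj_on_run] by (auto simp: a_def b_def)
  moreover have "(i mod T div run a) mod k = (j mod T div run b) mod k"
    "(i' mod T div run a) mod k = (j' mod T div run b) mod k"
    using match nth_encode[of i c] nth_encode[of j c'] nth_encode[of i' c] nth_encode[of j' c']
      assms(3-6) blocks
    by (simp_all add: a_def b_def)
  moreover have "pot c c' i j = run_potential k (run a) (run b) (i mod T) (j mod T)"
    "pot c c' i' j' = run_potential k (run a) (run b) (i' mod T) (j' mod T)"
    using blocks by (simp_all add: pot_def a_def b_def)
  ultimately show ?thesis
    using run_potential_step[of "i mod T" "i' mod T" "j mod T" "j' mod T" "run a" "run b" k]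
      run_pos offsets by simp
qed

lemma pot_step:
  assumes words: "set c \<subseteq> {1..K}" "set c' \<subseteq> {1..K}"
    and "i < i'" "j < j'" "i' < length c * T" "j' < length c' * T"
    and match: "encode c ! i = encode c' ! j" "encode c ! i' = encode c' ! j'"
  shows "k + 1 + pot c c' i j + (k - 1 + pot_max) * (i div T + j div T)
    \<le> (i' - i) + (j' - j) + pot c c' i' j' + (k - 1 + pot_max) * (i' div T + j' div T)
      + (if c ! (i div T) = c' ! (j div T) then k - 1 else 0)"
proof (cases "i' div T = i div T \<and> j' div T = j div T")
  case False
  have "i div T \<le> i' div T" "j div T \<le> j' div T"
    using \<open>i < i'\<close> \<open>j < j'\<close> by (simp_all add: div_le_mono)
  then have "(k - 1 + pot_max) * Suc (i div T + j div T) \<le> (k - 1 + pot_max) * (i' div T + j' div T)"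
    using False by (intro mult_le_mono2) auto
  moreover have "pot c c' i j \<le> pot_max"
    using assms(1-6) by (intro pot_le_pot_max) auto
  ultimately show ?thesis
    using \<open>i < i'\<close> \<open>j < j'\<close> by simp
next
  case True
  then show ?thesis
    using pot_step_within_blocks[OF assms(1-6) _ _ match] pot_same_symbol[of c i c' j]
      pot_same_symbol[of c i' c' j'] \<open>i < i'\<close> \<open>j < j'\<close>
    by (cases "c ! (i div T) = c' ! (j div T)") auto
qed

lemma matching_bound:
  fixes g h :: "nat \<Rightarrow> nat"
  assumes words: "set c \<subseteq> {1..K}" "set c' \<subseteq> {1..K}" "length c = n" "length c' = n"
    and mono: "strict_mono_on {..m} g" "strict_mono_on {..m} h"
    and match: "\<And>t. t \<le> m \<Longrightarrow> g t < n * T \<and> h t < n * T \<and> encode c ! g t = encode c' ! h t"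
  shows "(k + 1) * m \<le> (g m - g 0) + (h m - h 0) + pot_max + (k - 1 + pot_max) * (2 * (n - 1))
    + (k - 1) * card {t\<in>{..<m}. c ! (g t div T) = c' ! (h t div T)}"
proof -
  define Q where "Q t \<longleftrightarrow> c ! (g t div T) = c' ! (h t div T)" for t
  define f where "f t = g t + h t + pot c c' (g t) (h t) + (k - 1 + pot_max) * (g t div T + h t div T)" for t
  have "f t + (k + 1) \<le> f (Suc t) + (if Q t then k - 1 else 0)" if "t < m" for t
  proof -
    have "g t < g (Suc t)" "h t < h (Suc t)"
      using that mono by (auto intro: strict_mono_onD)
    then show ?thesis
      using pot_step[OF words(1,2), of "g t" "g (Suc t)" "h t" "h (Suc t)"] match[of t] match[of "Suc t"]
        that words(3,4) by (simp add: f_def Q_def)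
  qed
  then have "f 0 + (\<Sum>t<m. k + 1) \<le> f m + (\<Sum>t<m. if Q t then k - 1 else 0)"
    by (rule sum_le_telescope)
  moreover have "(\<Sum>t<m. if Q t then k - 1 else 0) = (k - 1) * card {t\<in>{..<m}. Q t}"
    by (simp add: sum.If_cases Int_def)
  ultimately have telescoped: "f 0 + (k + 1) * m \<le> f m + (k - 1) * card {t\<in>{..<m}. Q t}"
    by (simp add: mult.commute)
  moreover have "pot c c' (g m) (h m) \<le> pot_max"
    using match[of m] words by (intro pot_le_pot_max) auto
  moreover have "g m div T + h m div T \<le> 2 * (n - 1)"
    using match[of m] less_mult_imp_div_less[of "g m" n T] less_mult_imp_div_less[of "h m" n T] by simp
  then have "(k - 1 + pot_max) * (g m div T + h m div T) \<le> (k - 1 + pot_max) * (2 * (n - 1))"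
    by (rule mult_le_mono2)
  moreover have "g 0 \<le> g m" "h 0 \<le> h m"
    using mono by (auto intro: strict_mono_on_leD)
  ultimately show ?thesis
    unfolding f_def Q_def by linarith
qed

lemma card_equal_block_symbols_le:
  fixes g h :: "nat \<Rightarrow> nat"
  assumes mono: "strict_mono_on {..m} g" "strict_mono_on {..m} h"
    and bounds: "\<And>t. t \<le> m \<Longrightarrow> g t < length c * T \<and> h t < length c' * T"
  shows "card {t\<in>{..<m}. c ! (g t div T) = c' ! (h t div T)} \<le> 2 * T * LCS c c'"
proof -
  define S where "S = {t\<in>{..<m}. c ! (g t div T) = c' ! (h t div T)}"
  have "S \<subseteq> {..m}"
    by (auto simp: S_def)
  then have "mono_on S (\<lambda>t. g t div T)" "mono_on S (\<lambda>t. h t div T)"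
    using mono by (auto intro!: mono_onI div_le_mono dest: strict_mono_on_leD)
  moreover have "card {t\<in>S. g t div T = x} \<le> T" "card {t\<in>S. h t div T = x} \<le> T" for x
    using \<open>S \<subseteq> {..m}\<close> mono T_pos
    by (auto intro!: card_div_fibre_le intro: inj_on_subset strict_mono_on_imp_inj_on)
  ultimately obtain ps where ps: "sorted_wrt (\<lambda>p q. fst p < fst q \<and> snd p < snd q) ps"
    "set ps \<subseteq> (\<lambda>t. (g t div T, h t div T)) ` S" "card S \<le> 2 * T * length ps"
    using exists_increasing_pairs_of_bounded_fibres[of S "\<lambda>t. g t div T" "\<lambda>t. h t div T" T]
    by (auto simp: S_def)
  have "\<forall>(x, y)\<in>set ps. x < length c \<and> y < length c' \<and> c ! x = c' ! y"
    using ps(2) bounds by (force simp: S_def less_mult_imp_div_less)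
  then have "length ps \<le> LCS c c'"
    using length_le_LCS_of_increasing_pairs[OF ps(1)] by blast
  then show ?thesis
    using ps(3) by (simp add: S_def order_trans)
qed

lemma encode_common_subseq_bound:
  assumes words: "set c \<subseteq> {1..K}" "set c' \<subseteq> {1..K}" "length c = n" "length c' = n"
    and cs: "common_subseq (encode c) (encode c') I J"
  shows "(k + 1) * cs_len I J
    \<le> cs_span I J + (k - 1 + pot_max) * (2 * n - 1) + (k - 1) * (2 * T * LCS c c')"
proof (cases "I = {}")
  case True
  then show ?thesis
    by (simp add: cs_len_def)
next
  case False
  obtain g h :: "nat \<Rightarrow> nat" and m where mono: "strict_mono_on {..m} g" "strict_mono_on {..m} h"
    and match: "\<And>t. t \<le> m \<Longrightarrow> g t < n * T \<and> h t < n * T \<and> encode c ! g t = encode c' ! h t"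
    and len: "cs_len I J = Suc m" and span: "cs_span I J = (g m - g 0) + (h m - h 0) + 2"
    using common_subseq_matching[OF cs False] words(3,4) by (metis length_encode)
  have "n \<ge> 1"
    using match[of 0] by (cases n) auto
  have "(k + 1) * m \<le> (g m - g 0) + (h m - h 0) + pot_max + (k - 1 + pot_max) * (2 * (n - 1))
    + (k - 1) * card {t\<in>{..<m}. c ! (g t div T) = c' ! (h t div T)}"
    by (rule matching_bound[OF words mono match])
  moreover have "card {t\<in>{..<m}. c ! (g t div T) = c' ! (h t div T)} \<le> 2 * T * LCS c c'"
    using match words(3,4) by (intro card_equal_block_symbols_le[OF mono]) auto
  then have "(k - 1) * card {t\<in>{..<m}. c ! (g t div T) = c' ! (h t div T)} \<le> (k - 1) * (2 * T * LCS c c')"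
    by (rule mult_le_mono2)
  moreover have "2 * n - 1 = 2 * (n - 1) + 1"
    using \<open>n \<ge> 1\<close> by simp
  then have "(k - 1 + pot_max) * (2 * n - 1) = (k - 1 + pot_max) * (2 * (n - 1)) + (k - 1 + pot_max)"
    by (simp only: distrib_left mult_1_right)
  moreover have "(k + 1) * Suc m = (k + 1) * m + 2 + (k - 1)"
    using k_ge_2 by simp
  ultimately show ?thesis
    unfolding len span by linarith
qed

lemma pot_max_le:
  fixes \<gamma> :: real
  assumes "1 \<le> \<gamma> * D"
  shows "real (k - 1 + pot_max) \<le> real (k + 1) * \<gamma> * real T"
proof -
  have "k + 1 \<le> (k + 1) * D ^ (K - 1)"
    using D_ge_2 mult_le_mono2[of 1 "D ^ (K - 1)" "k + 1"] by simp
  then have "k - 1 \<le> (k + 1) * D ^ (K - 1)"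
    by linarith
  moreover have "(k + 1) * k * D ^ (K - 1) = (k + 1) * D ^ (K - 1) + pot_max"
    using k_ge_2 unfolding pot_max_def by (cases k) (simp_all add: algebra_simps)
  ultimately have "k - 1 + pot_max \<le> (k + 1) * k * D ^ (K - 1)"
    by linarith
  then have "real (k - 1 + pot_max) \<le> real (k + 1) * real k * real D ^ (K - 1)"
    by (metis of_nat_le_iff of_nat_mult of_nat_power)
  also have "\<dots> \<le> real (k + 1) * real k * real D ^ (K - 1) * (\<gamma> * D)"
    using mult_left_mono[OF assms, of "real (k + 1) * real k * real D ^ (K - 1)"] by simp
  also have "\<dots> = real (k + 1) * \<gamma> * real T"
    by (simp add: T_eq)
  finally show ?thesis .
qed

lemma encode_span_bound:
  fixes \<gamma> :: real
  assumes "1 \<le> \<gamma> * D"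
    and words: "set c \<subseteq> {1..K}" "set c' \<subseteq> {1..K}" "length c = n" "length c' = n"
    and lcs: "real (LCS c c') \<le> \<gamma> * n"
    and cs: "common_subseq (encode c) (encode c') I J"
  shows "real (k + 1) * cs_len I J - 4 * \<gamma> * k * real (n * T) \<le> cs_span I J"
proof -
  have "real (k + 1) * cs_len I J
      \<le> cs_span I J + real (k - 1 + pot_max) * real (2 * n - 1) + real (k - 1) * (2 * T * LCS c c')"
    using encode_common_subseq_bound[OF words cs] by (metis of_nat_add of_nat_le_iff of_nat_mult)
  moreover have "real (k - 1 + pot_max) * real (2 * n - 1) \<le> real (k + 1) * \<gamma> * T * (2 * n)"
    using pot_max_le[OF assms(1)] by (intro mult_mono) auto
  moreover have "real (k - 1) * (2 * T * LCS c c') \<le> real (k - 1) * (2 * T * (\<gamma> * n))"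
    using lcs by (simp add: mult_left_mono)
  moreover have "real (k + 1) * \<gamma> * T * (2 * n) + real (k - 1) * (2 * T * (\<gamma> * n)) = 4 * \<gamma> * k * real (n * T)"
    using k_ge_2 by (simp add: of_nat_diff algebra_simps)
  ultimately show ?thesis
    by linarith
qed

lemma encode_code_span_bound:
  fixes \<gamma> :: real
  assumes "1 \<le> \<gamma> * D" "finite C" and words: "\<forall>c\<in>C. length c = n \<and> set c \<subseteq> {1..K}"
    and "real (LCS_code C) \<le> \<gamma> * n"
    and "d \<in> encode ` C" "d' \<in> encode ` C" "d \<noteq> d'" "common_subseq d d' I J"
  shows "real (k + 1) * cs_len I J - 4 * \<gamma> * k * real (n * T) \<le> cs_span I J"
proof -
  obtain c c' where "c \<in> C" "c' \<in> C" "c \<noteq> c'" "d = encode c" "d' = encode c'"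
    using assms(5-7) by blast
  moreover have "real (LCS c c') \<le> \<gamma> * n"
    using LCS_code_ge[OF \<open>finite C\<close> \<open>c \<in> C\<close> \<open>c' \<in> C\<close> \<open>c \<noteq> c'\<close>] assms(4) by linarith
  ultimately show ?thesis
    using encode_span_bound[OF assms(1)] words assms(8) by blast
qed

lemma LCS_code_encode_le:
  fixes \<gamma> :: real
  assumes "1 \<le> \<gamma> * D" "finite C" "c1 \<in> C" "c2 \<in> C" "c1 \<noteq> c2"
    and words: "\<forall>c\<in>C. length c = n \<and> set c \<subseteq> {1..K}" and "real (LCS_code C) \<le> \<gamma> * n"
  shows "real (LCS_code (encode ` C)) \<le> (2 + 4 * \<gamma> * k) / real (k + 1) * real (n * T)"
proof -
  have "encode c1 \<in> encode ` C" "encode c2 \<in> encode ` C" "encode c1 \<noteq> encode c2"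
    using assms(3-5) encode_injective[of c1 c2] words by auto
  then have "real (LCS_code (encode ` C)) \<le> (2 * real (n * T) + 4 * \<gamma> * k * real (n * T)) / real (k + 1)"
    using \<open>finite C\<close> words length_encode encode_code_span_bound[OF assms(1,2) words assms(7)]
    by (intro LCS_code_le_of_span_bound) auto
  also have "\<dots> = (2 + 4 * \<gamma> * k) / real (k + 1) * real (n * T)"
    by (simp add: distrib_right)
  finally show ?thesis .
qed

lemma real_T_le:
  fixes \<gamma> :: real
  assumes "0 < \<gamma>" "\<gamma> * D \<le> 3"
  shows "real T \<le> 32 * (2 * real k / \<gamma>) ^ K"
proof -
  have "k * 3 ^ K \<le> 32 * (2 * k) ^ K"
  proof -
    obtain K' where "K = Suc K'"
      using K_pos by (cases K) auto
    moreover have "3 ^ K' \<le> (2 * k) ^ K'"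
      using k_ge_2 by (intro power_mono) auto
    then have "k * 3 * 3 ^ K' \<le> k * 64 * (2 * k) ^ K'"
      by (intro mult_le_mono) auto
    ultimately show ?thesis
      by (simp add: algebra_simps)
  qed
  have "real T = real k * real D ^ K"
    by (simp add: T_def)
  also have "\<dots> \<le> real k * (3 / \<gamma>) ^ K"
    using assms by (intro mult_left_mono power_mono) (auto simp: field_simps)
  also have "\<dots> = real (k * 3 ^ K) / \<gamma> ^ K"
    by (simp add: power_divide)
  also have "\<dots> \<le> real (32 * (2 * k) ^ K) / \<gamma> ^ K"
    using \<open>k * 3 ^ K \<le> 32 * (2 * k) ^ K\<close> assms(1)
    by (intro divide_right_mono) (simp_all only: of_nat_le_iff zero_le_power less_imp_le)
  also have "\<dots> = 32 * (2 * real k / \<gamma>) ^ K"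
    by (simp add: power_divide)
  finally show ?thesis .
qed

end

lemma exists_base_for_density:
  fixes \<gamma> :: real
  assumes "0 < \<gamma>" "\<gamma> \<le> 1"
  shows "\<exists>D::nat. 2 \<le> D \<and> 1 \<le> \<gamma> * D \<and> \<gamma> * D \<le> 3"
proof -
  define D where "D = nat \<lceil>1 / \<gamma>\<rceil> + 1"
  have "1 \<le> 1 / \<gamma>"
    using assms by simp
  then have D: "real D = of_int \<lceil>1 / \<gamma>\<rceil> + 1" "1 / \<gamma> \<le> of_int \<lceil>1 / \<gamma>\<rceil>" "of_int \<lceil>1 / \<gamma>\<rceil> \<le> 1 / \<gamma> + 1"
    by (auto simp: D_def of_int_ceiling_le_add_one)
  then have "2 \<le> D"
    using \<open>1 \<le> 1 / \<gamma>\<close> by linarith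
  moreover have "1 \<le> \<gamma> * of_int \<lceil>1 / \<gamma>\<rceil>"
    using mult_left_mono[OF D(2), of \<gamma>] assms by simp
  then have "1 \<le> \<gamma> * D" "\<gamma> * D \<le> 1 + 2 * \<gamma>"
    using D assms by (auto simp: field_simps)
  ultimately show ?thesis
    using assms by (intro exI[of _ D]) auto
qed

theorem theorem3p2:
  fixes K k n :: nat and \<gamma> :: real and C1 :: "nat list set"
  assumes "K \<ge> 2" and "k \<ge> 2" and "n \<ge> 1" and "\<gamma> > 0"
    and "\<forall>c\<in>C1. length c = n \<and> set c \<subseteq> {1..K}"
    and "card C1 \<ge> 2"
    and "real (LCS_code C1) = \<gamma> * real n"
  shows "\<exists>(T::nat) (\<tau>::nat \<Rightarrow> nat list).
           real T \<le> 32 * (2 * real k / \<gamma>) ^ K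
         \<and> inj_on \<tau> {1..K}
         \<and> (\<forall>a\<in>{1..K}. length (\<tau> a) = T \<and> set (\<tau> a) \<subseteq> {1..k})
         \<and> (let N = n * T; C2 = concat_code \<tau> C1 in
              (\<forall>c\<in>C2. \<forall>c'\<in>C2. \<forall>I J. c \<noteq> c' \<and> common_subseq c c' I J \<longrightarrow>
                  real (cs_span I J) \<ge> real (k + 1) * real (cs_len I J) - 4 * \<gamma> * real k * real N)
            \<and> real (LCS_code C2) \<le> (2 + 4 * \<gamma> * real k) / real (k + 1) * real N
            \<and> real (LCS_code C2) < (2 / real (k + 1) + 4 * \<gamma>) * real N)"
proof -
  have "finite C1"
    using assms(6) card.infinite by fastforce
  then obtain c1 c2 where c12: "c1 \<in> C1" "c2 \<in> C1" "c1 \<noteq> c2"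
    using assms(6) card_le_Suc0_iff_eq[of C1] by auto
  have "\<gamma> * n \<le> n"
    using LCS_code_attained[OF \<open>finite C1\<close> c12] LCS_le_length assms(5,7) by (metis of_nat_le_iff)
  then obtain D :: nat where D: "2 \<le> D" "1 \<le> \<gamma> * D" "\<gamma> * D \<le> 3"
    using exists_base_for_density[of \<gamma>] assms(3,4) by auto
  interpret periodic_inner_code k D K
    using assms(1,2) D(1) by unfold_locales auto
  have C2: "concat_code tau C1 = encode ` C1"
    by (simp add: concat_code_def encode_def)
  have lcs1: "real (LCS_code C1) \<le> \<gamma> * n"
    using assms(7) by simp
  note span = encode_code_span_bound[OF D(2) \<open>finite C1\<close> assms(5) lcs1]
  have lcs2: "real (LCS_code (encode ` C1)) \<le> (2 + 4 * \<gamma> * k) / real (k + 1) * real (n * T)"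
    by (rule LCS_code_encode_le[OF D(2) \<open>finite C1\<close> c12 assms(5) lcs1])
  have "4 * \<gamma> * k / real (k + 1) < 4 * \<gamma>"
    using assms(4) by (simp add: divide_less_eq)
  then have strict: "(2 + 4 * \<gamma> * k) / real (k + 1) * real (n * T) < (2 / real (k + 1) + 4 * \<gamma>) * real (n * T)"
    using assms(3) T_pos by (intro mult_strict_right_mono) (simp_all add: add_divide_distrib)
  show ?thesis
  proof (intro exI[of _ T] exI[of _ tau] conjI)
    show "real T \<le> 32 * (2 * real k / \<gamma>) ^ K"
      by (rule real_T_le[OF assms(4) D(3)])
    show "inj_on tau {1..K}" "\<forall>a\<in>{1..K}. length (tau a) = T \<and> set (tau a) \<subseteq> {1..k}"
      using inj_on_tau set_tau by simp_all
  qed (unfold Let_def C2, use span lcs2 strict in \<open>auto intro: span\<close>)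
qed

end
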